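(* Let $N$ divide $n$, $\mathfrak g=\mathfrak{sl}_N(\mathbb C)$ and $V_N=(\mathbb C[\mathfrak g]\otimes(\mathbb C^N)^{\otimes n})^{\mathfrak g}$. There is an algebra homomorphism $\zeta_N:H_n(N/n)\to\mathrm{End}(V_N)$ with $\zeta_N(s_{ij})=s_{ij}$ (permutation of tensor factors), $\zeta_N(\mathrm x_i)=X_i$, $\zeta_N(\mathrm y_i)=Y_i$, where for $f\in V_N$ and $A\in\mathfrak g$, $(X_if)(A)=A_if(A)$ and $(Y_if)(A)=\frac Nn\sum_p(b_p)_i\frac{\partial f}{\partial b_p}(A)$.
   Context: $\mathfrak g$ acts on $\mathbb C[\mathfrak g]$ by the (infinitesimal) adjoint action and on $(\mathbb C^N)^{\otimes n}$ diagonally. For a matrix $B$, $B_i$ denotes $B$ acting on the $i$-th tensor factor of $(\mathbb C^N)^{\otimes n}$. $\{b_p\}$ is an orthonormal basis of $\mathfrak g$ with respect to the trace form $(A,B)\mapsto\mathrm{tr}(AB)$, and $\partial/\partial b_p$ is the derivative in direction $b_p$. $H_n(k)$ is the rational Cherednik algebra of type $A_{n-1}$: the quotient of $\mathbb C[S_n]\ltimes\mathbb C\langle\mathrm x_1,\dots,\mathrm x_n,\mathrm y_1,\dots,\mathrm y_n\rangle$ by $\sum\mathrm x_i=0$, $\sum\mathrm y_i=0$, $[\mathrm x_i,\mathrm x_j]=[\mathrm y_i,\mathrm y_j]=0$, $[\mathrm x_i,\mathrm y_j]=\frac1n-ks_{ij}$ ($i\ne j$). *)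

theory Defs
  imports "HOL-Analysis.Analysis" "HOL-Combinatorics.Transposition" "HOL-Library.Function_Algebras"
begin

text \<open>Matrices in gl_N are complex^'N^'N (N = CARD('N)); the tensor power
 (C^N)^{\<otimes>n} (n = CARD('n)) is represented by coefficient arrays
 ('n \<Rightarrow> 'N) \<Rightarrow> complex.  Elements of C[g] \<otimes> (C^N)^{\<otimes>n} are
 polynomial maps from matrices to tensors, considered on sl_N.\<close>

definition mtr :: "complex^'N^'N \<Rightarrow> complex" where
  "mtr A = (\<Sum>i\<in>UNIV. A$i$i)"

definition sl :: "(complex^'N^'N) set" where
  "sl = {A. mtr A = 0}"

definition mscale :: "complex \<Rightarrow> complex^'N^'N \<Rightarrow> complex^'N^'N" where
  "mscale t B = (\<chi> i j. t * B$i$j)"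

type_synonym ('N,'n) vfun = "complex^'N^'N \<Rightarrow> ('n \<Rightarrow> 'N) \<Rightarrow> complex"

inductive_set polyfun :: "(complex^'N^'N \<Rightarrow> complex) set" where
  pf_const: "(\<lambda>A. c) \<in> polyfun"
| pf_coord: "(\<lambda>A. A$i$j) \<in> polyfun"
| pf_add: "p \<in> polyfun \<Longrightarrow> q \<in> polyfun \<Longrightarrow> (\<lambda>A. p A + q A) \<in> polyfun"
| pf_mult: "p \<in> polyfun \<Longrightarrow> q \<in> polyfun \<Longrightarrow> (\<lambda>A. p A * q A) \<in> polyfun"

definition act_on :: "complex^'N^'N \<Rightarrow> 'n \<Rightarrow> (('n \<Rightarrow> 'N) \<Rightarrow> complex) \<Rightarrow> (('n \<Rightarrow> 'N) \<Rightarrow> complex)" where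
  "act_on B i v = (\<lambda>w. \<Sum>k\<in>UNIV. B$(w i)$k * v (w(i := k)))"

text \<open>Permutation sigma of the tensor factors (moves factor j to position sigma j).\<close>
definition perm_act :: "('n \<Rightarrow> 'n) \<Rightarrow> (('n \<Rightarrow> 'N) \<Rightarrow> complex) \<Rightarrow> (('n \<Rightarrow> 'N) \<Rightarrow> complex)" where
  "perm_act \<sigma> v = (\<lambda>w. v (w \<circ> \<sigma>))"

definition dirderiv :: "(complex^'N^'N \<Rightarrow> ('n \<Rightarrow> 'N) \<Rightarrow> complex) \<Rightarrow> complex^'N^'N \<Rightarrow> complex^'N^'N
     \<Rightarrow> ('n \<Rightarrow> 'N) \<Rightarrow> complex" where
  "dirderiv f A B = (\<lambda>w. deriv (\<lambda>t. f (A + mscale t B) w) 0)"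

text \<open>V_N = (C[g] \<otimes> (C^N)^{\<otimes>n})^g: polynomial maps invariant under the
 infinitesimal adjoint action: (B.f)(A) = - df_A([B,A]) + \<Sum>_i B_i f(A) = 0.
 Two such maps agreeing on sl are the same element of V_N.\<close>
definition VN :: "(complex^'N^'N \<Rightarrow> ('n \<Rightarrow> 'N) \<Rightarrow> complex) set" where
  "VN = {f. (\<forall>w. (\<lambda>A. f A w) \<in> polyfun) \<and>
            (\<forall>A\<in>sl. \<forall>B\<in>sl. dirderiv f A (B ** A - A ** B) = (\<Sum>i\<in>UNIV. act_on B i (f A)))}"

definition eqV :: "((complex^'N^'N \<Rightarrow> ('n \<Rightarrow> 'N) \<Rightarrow> complex) \<Rightarrow> (complex^'N^'N \<Rightarrow> ('n \<Rightarrow> 'N) \<Rightarrow> complex))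
   \<Rightarrow> ((complex^'N^'N \<Rightarrow> ('n \<Rightarrow> 'N) \<Rightarrow> complex) \<Rightarrow> (complex^'N^'N \<Rightarrow> ('n \<Rightarrow> 'N) \<Rightarrow> complex)) \<Rightarrow> bool" where
  "eqV F G = (\<forall>f\<in>VN. \<forall>A\<in>sl. F f A = G f A)"

definition Pop :: "('n \<Rightarrow> 'n) \<Rightarrow> (complex^'N^'N \<Rightarrow> ('n \<Rightarrow> 'N) \<Rightarrow> complex) \<Rightarrow> (complex^'N^'N \<Rightarrow> ('n \<Rightarrow> 'N) \<Rightarrow> complex)" where
  "Pop \<sigma> f = (\<lambda>A. perm_act \<sigma> (f A))"

definition Xop :: "'n \<Rightarrow> (complex^'N^'N \<Rightarrow> ('n \<Rightarrow> 'N) \<Rightarrow> complex) \<Rightarrow> (complex^'N^'N \<Rightarrow> ('n \<Rightarrow> 'N) \<Rightarrow> complex)" where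
  "Xop i f = (\<lambda>A. act_on A i (f A))"

definition Yop :: "(nat \<Rightarrow> complex^'N^'N) \<Rightarrow> 'n \<Rightarrow> (complex^'N^'N \<Rightarrow> ('n \<Rightarrow> 'N) \<Rightarrow> complex) \<Rightarrow> (complex^'N^'N \<Rightarrow> ('n \<Rightarrow> 'N) \<Rightarrow> complex)" where
  "Yop b i f = (\<lambda>A w. (of_nat CARD('N) / of_nat CARD('n)) *
        (\<Sum>p<CARD('N)^2 - 1. act_on (b p) i (dirderiv f A (b p))) w)"

definition orthonormal_sl_basis :: "(nat \<Rightarrow> complex^'N^'N) \<Rightarrow> bool" where
  "orthonormal_sl_basis b = ((\<forall>p<CARD('N)^2 - 1. b p \<in> sl) \<and>
     (\<forall>p<CARD('N)^2 - 1. \<forall>q<CARD('N)^2 - 1. mtr (b p ** b q) = (if p = q then 1 else 0)))"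

definition opcomm where "opcomm F G = (\<lambda>f. F (G f) - G (F f))"

end

theory Submission
  imports Defs
begin

(*
  The operators Y_i are built from the Casimir tensor of sl_N for the trace form,
  Omega = sum_p b_p (x) b_p, whose entries are
    Omega_(ac,de) = [a = e][c = d] - [a = c][d = e] / N,
  because the b_p together with the identity matrix form a basis of gl_N whose trace-dual
  basis is the b_p together with 1/N times the identity.  Differentiating the invariance
  condition defining V_N along sl_N and using the ad-invariance of Omega shows that V_N is
  stable under the Y_i; the same invariance together with the symmetry of second derivatives
  of polynomials gives sum_i Y_i = 0 on sl_N and [Y_i, Y_j] = 0.  Finally, for i /= j the
  commutator [X_i, Y_j] is -N/n times the contraction of Omega between the factors i and j,
  which acts as s_ij - 1/N.
*)

lemma sum_fun_apply: "(\<Sum>i\<in>I. f i) x = (\<Sum>i\<in>I. f i x)"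
  by (induction I rule: infinite_finite_induct) auto

lemma sum_if_delta:
  fixes g :: "'a::finite \<Rightarrow> 'b::comm_monoid_add"
  assumes "\<And>k. Q k \<longleftrightarrow> k = x \<and> P k"
  shows "(\<Sum>k\<in>UNIV. if Q k then g k else 0) = (if P x then g x else 0)"
proof -
  have "(\<Sum>k\<in>UNIV. if Q k then g k else 0) = (\<Sum>k\<in>UNIV. if k = x then (if P k then g k else 0) else 0)"
    using assms by (intro sum.cong) auto
  then show ?thesis
    by simp
qed

lemma sum_if_eq_conj:
  fixes g :: "'a::finite \<Rightarrow> 'b::comm_monoid_add"
  shows "(\<Sum>k\<in>UNIV. if k = x \<and> P k then g k else 0) = (if P x then g x else 0)"
    and "(\<Sum>k\<in>UNIV. if x = k \<and> P k then g k else 0) = (if P x then g x else 0)"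
    and "(\<Sum>k\<in>UNIV. if P k \<and> k = x then g k else 0) = (if P x then g x else 0)"
    and "(\<Sum>k\<in>UNIV. if P k \<and> x = k then g k else 0) = (if P x then g x else 0)"
  by (rule sum_if_delta; auto)+

lemma sum_swap_pairs:
  "(\<Sum>a\<in>A. \<Sum>b\<in>B. \<Sum>c\<in>C. \<Sum>d\<in>D. g a b c d) = (\<Sum>c\<in>C. \<Sum>d\<in>D. \<Sum>a\<in>A. \<Sum>b\<in>B. g a b c d)"
proof -
  have "(\<Sum>b\<in>B. \<Sum>c\<in>C. \<Sum>d\<in>D. g a b c d) = (\<Sum>c\<in>C. \<Sum>b\<in>B. \<Sum>d\<in>D. g a b c d)"
    and "(\<Sum>b\<in>B. \<Sum>d\<in>D. g a b c d) = (\<Sum>d\<in>D. \<Sum>b\<in>B. g a b c d)" for a c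
    by (rule sum.swap)+
  then have "(\<Sum>a\<in>A. \<Sum>b\<in>B. \<Sum>c\<in>C. \<Sum>d\<in>D. g a b c d) = (\<Sum>a\<in>A. \<Sum>c\<in>C. \<Sum>d\<in>D. \<Sum>b\<in>B. g a b c d)"
    by (simp only:)
  also have "\<dots> = (\<Sum>c\<in>C. \<Sum>a\<in>A. \<Sum>d\<in>D. \<Sum>b\<in>B. g a b c d)"
    by (rule sum.swap)
  also have "\<dots> = (\<Sum>c\<in>C. \<Sum>d\<in>D. \<Sum>a\<in>A. \<Sum>b\<in>B. g a b c d)"
    by (intro sum.cong refl) (rule sum.swap)
  finally show ?thesis .
qed

section \<open>Matrix units and the trace form\<close>

definition matrix_unit :: "'N \<Rightarrow> 'N \<Rightarrow> complex^'N^'N" where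
  "matrix_unit a b = (\<chi> i j. if i = a \<and> j = b then 1 else 0)"

lemma matrix_unit_component: "matrix_unit a b $ i $ j = (if i = a \<and> j = b then 1 else 0)"
  by (simp add: matrix_unit_def)

lemma sum_matrix_unit_expansion:
  "(\<Sum>i\<in>UNIV. \<Sum>j\<in>UNIV. matrix_unit a b $ i $ j * g i j) = g a b"
  by (simp add: matrix_unit_component if_distrib[of "\<lambda>x. x * _"] sum_if_eq_conj cong: if_cong)

lemma mtr_matrix_unit_mult: "mtr (matrix_unit a b ** B) = B $ b $ a"
  by (simp add: mtr_def matrix_matrix_mult_def matrix_unit_component
      if_distrib[of "\<lambda>x. x * _"] sum_if_eq_conj cong: if_cong)

lemma mtr_matrix_unit: "mtr (matrix_unit a b) = (if a = b then 1 else 0)"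
  by (simp add: mtr_def matrix_unit_component sum_if_eq_conj)

lemma mat_component: "mat c $ i $ j = (if i = j then c else 0)"
  by (simp add: mat_def)

lemma mtr_mat: "mtr (mat c :: complex^'N^'N) = of_nat CARD('N) * c"
  by (simp add: mtr_def mat_def)

lemma mtr_mult_mat: "mtr (X ** mat c) = c * mtr X"
  unfolding mtr_def matrix_matrix_mult_def mat_def
  by (simp add: if_distrib[of "\<lambda>x. _ * x"] sum_distrib_left mult.commute cong: if_cong)

(* gl_N is flattened to complex^('N \<times> 'N) so that the dimension theory of vec applies. *)
definition flat_matrix :: "complex^'N^'N \<Rightarrow> complex^('N \<times> 'N)" where
  "flat_matrix X = (\<chi> ij. X $ fst ij $ snd ij)"

definition trace_pairing :: "complex^('N \<times> 'N) \<Rightarrow> complex^'N^'N \<Rightarrow> complex" where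
  "trace_pairing x Y = (\<Sum>ij\<in>UNIV. x $ ij * Y $ snd ij $ fst ij)"

lemma trace_pairing_flat_matrix: "trace_pairing (flat_matrix X) Y = mtr (X ** Y)"
proof -
  have "mtr (X ** Y) = (\<Sum>(i, k)\<in>UNIV \<times> UNIV. X $ i $ k * Y $ k $ i)"
    by (simp add: mtr_def matrix_matrix_mult_def sum.cartesian_product)
  then show ?thesis
    by (simp add: trace_pairing_def flat_matrix_def case_prod_beta)
qed

lemma trace_pairing_sum:
  "finite P \<Longrightarrow> trace_pairing (\<Sum>p\<in>P. u p *s v p) Y = (\<Sum>p\<in>P. u p * trace_pairing (v p) Y)"
  unfolding trace_pairing_def
  by (simp add: sum_component sum_distrib_left sum_distrib_right mult.assoc sum.swap[of _ P])

lemma biorthogonal_family_expansion: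
  fixes v :: "nat \<Rightarrow> complex^('N::finite \<times> 'N)" and Y :: "nat \<Rightarrow> complex^'N^'N"
  assumes dual: "\<And>p q. p \<le> M \<Longrightarrow> q \<le> M \<Longrightarrow> trace_pairing (v p) (Y q) = (if p = q then 1 else 0)"
    and card: "Suc M = CARD('N \<times> 'N)"
  shows "x = (\<Sum>p\<le>M. trace_pairing x (Y p) *s v p)"
proof -
  have coeff: "trace_pairing (\<Sum>p\<le>M. u p *s v p) (Y q) = u q" if "q \<le> M" for u q
    using that by (simp add: trace_pairing_sum dual if_distrib[of "\<lambda>x. _ * x"] cong: if_cong)
  have inj: "inj_on v {..M}"
    by (rule inj_onI) (metis atMost_iff dual one_neq_zero)
  have "vec.independent (v ` {..M})"
  proof (rule vec.independent_if_scalars_zero)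
    fix c x assume sum0: "(\<Sum>y\<in>v ` {..M}. c y *s y) = 0" and "x \<in> v ` {..M}"
    then obtain q where "q \<le> M" "x = v q" by auto
    then show "c x = 0"
      using sum0 coeff[of q "\<lambda>p. c (v p)"] by (simp add: sum.reindex[OF inj] trace_pairing_def)
  qed simp
  moreover have "card (v ` {..M}) = vec.dim (UNIV :: (complex^('N \<times> 'N)) set)"
    using card card_image[OF inj] by (simp add: card_cart_basis)
  ultimately have "x \<in> vec.span (v ` {..M})"
    using vec.card_eq_dim[of "v ` {..M}" UNIV] by auto
  then obtain u where "x = (\<Sum>y\<in>v ` {..M}. u y *s y)"
    by (auto simp: vec.span_finite)
  then have x: "x = (\<Sum>p\<le>M. u (v p) *s v p)"
    by (simp add: sum.reindex[OF inj])
  have "trace_pairing x (Y p) = u (v p)" if "p \<le> M" for p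
    using coeff[OF that] x by simp
  then show ?thesis
    by (subst x) (intro sum.cong refl, simp)
qed

lemma orthonormal_sl_basis_expansion:
  fixes b :: "nat \<Rightarrow> complex^'N::finite^'N"
  assumes "orthonormal_sl_basis b"
  shows "X $ a $ c = (\<Sum>p<CARD('N)^2 - 1. mtr (X ** b p) * b p $ a $ c)
                     + mtr X / of_nat CARD('N) * (if a = c then 1 else 0)"
proof -
  define M where "M = CARD('N)^2 - 1"
  (* the b p and mat 1 form a basis of gl_N, with trace-dual basis the b p and mat (1/N) *)
  define v where "v p = flat_matrix (if p < M then b p else mat 1)" for p
  define Y where "Y p = (if p < M then b p else mat (1 / of_nat CARD('N)))" for p
  have dual: "trace_pairing (v p) (Y q) = (if p = q then 1 else 0)" if "p \<le> M" "q \<le> M" for p q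
    using assms that
    by (auto simp: v_def Y_def trace_pairing_flat_matrix orthonormal_sl_basis_def sl_def M_def
        mtr_mult_mat mtr_mat)
  have "Suc M = CARD('N \<times> 'N)"
    by (simp add: M_def power2_eq_square)
  note expansion = biorthogonal_family_expansion[of M v Y "flat_matrix X", OF dual this]
  have "X $ a $ c = flat_matrix X $ (a, c)"
    by (simp add: flat_matrix_def)
  also have "\<dots> = (\<Sum>p\<le>M. mtr (X ** Y p) * v p $ (a, c))"
    using arg_cong[OF expansion, of "\<lambda>x. x $ (a, c)"] by (simp add: trace_pairing_flat_matrix)
  also have "\<dots> = (\<Sum>p<M. mtr (X ** Y p) * v p $ (a, c)) + mtr (X ** Y M) * v M $ (a, c)"
    by (simp add: lessThan_Suc_atMost[symmetric])
  also have "\<dots> = (\<Sum>p<M. mtr (X ** b p) * b p $ a $ c)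
                     + mtr X / of_nat CARD('N) * (if a = c then 1 else 0)"
    by (simp add: v_def Y_def flat_matrix_def mtr_mult_mat mat_component)
  finally show ?thesis
    unfolding M_def .
qed

section \<open>The Casimir tensor of sl_N\<close>

lemma casimir_identity:
  fixes b :: "nat \<Rightarrow> complex^'N::finite^'N"
  assumes "orthonormal_sl_basis b"
  shows "(\<Sum>p<CARD('N)^2 - 1. b p $ a $ c * b p $ d $ e) =
     (if a = e \<and> c = d then 1 else 0) - (if a = c \<and> d = e then 1 else 0) / of_nat CARD('N)"
  using orthonormal_sl_basis_expansion[OF assms, of "matrix_unit e d" a c]
  by (auto simp: mtr_matrix_unit_mult mtr_matrix_unit matrix_unit_component mult.commute)

lemma sum_mult_matrix_mult_component:
  fixes x :: "'i \<Rightarrow> complex^'N::finite^'N" and y :: "'i \<Rightarrow> complex"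
  shows "(\<Sum>p\<in>P. (x p ** B) $ a $ c * y p) = (\<Sum>k\<in>UNIV. B $ k $ c * (\<Sum>p\<in>P. x p $ a $ k * y p))"
    and "(\<Sum>p\<in>P. (B ** x p) $ a $ c * y p) = (\<Sum>k\<in>UNIV. B $ a $ k * (\<Sum>p\<in>P. x p $ k $ c * y p))"
    and "(\<Sum>p\<in>P. y p * (x p ** B) $ a $ c) = (\<Sum>k\<in>UNIV. B $ k $ c * (\<Sum>p\<in>P. y p * x p $ a $ k))"
    and "(\<Sum>p\<in>P. y p * (B ** x p) $ a $ c) = (\<Sum>k\<in>UNIV. B $ a $ k * (\<Sum>p\<in>P. y p * x p $ k $ c))"
  by (simp_all add: matrix_matrix_mult_def sum_distrib_left sum_distrib_right sum.swap[of _ P] mult_ac)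

lemma casimir_commutator:
  fixes b :: "nat \<Rightarrow> complex^'N::finite^'N"
  assumes "orthonormal_sl_basis b"
  shows "(\<Sum>p<CARD('N)^2 - 1. (b p ** B - B ** b p) $ a $ c * b p $ d $ e) =
         (\<Sum>p<CARD('N)^2 - 1. b p $ a $ c * (B ** b p - b p ** B) $ d $ e)"
proof -
  define P where "P = {..<CARD('N)^2 - 1}"
  have casimir: "(\<Sum>p\<in>P. b p $ a $ c * b p $ d $ e) =
     (if a = e \<and> c = d then 1 else 0) - (if a = c \<and> d = e then 1 else 0) / of_nat CARD('N)" for a c d e
    unfolding P_def by (rule casimir_identity[OF assms])
  show ?thesis
    unfolding P_def[symmetric]
    by (simp add: left_diff_distrib right_diff_distrib sum_subtractf sum_mult_matrix_mult_component
        casimir if_distrib[of "\<lambda>x. _ * x"] sum_divide_distrib[symmetric] sum_if_eq_conj cong: if_cong)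
qed

definition matrix_bilinear :: "(complex^'N^'N \<Rightarrow> complex^'N^'N \<Rightarrow> complex) \<Rightarrow> bool" where
  "matrix_bilinear \<beta> \<longleftrightarrow> (\<exists>K. \<forall>X Y. \<beta> X Y =
     (\<Sum>a\<in>UNIV. \<Sum>b\<in>UNIV. \<Sum>c\<in>UNIV. \<Sum>d\<in>UNIV. X $ a $ b * Y $ c $ d * K a b c d))"

lemma matrix_bilinear_uminus_left: "matrix_bilinear \<beta> \<Longrightarrow> \<beta> (- X) Y = - \<beta> X Y"
  unfolding matrix_bilinear_def by (auto simp: sum_negf)

lemma casimir_ad_invariant:
  fixes b :: "nat \<Rightarrow> complex^'N::finite^'N"
  assumes "orthonormal_sl_basis b" and "matrix_bilinear \<beta>"
  shows "(\<Sum>p<CARD('N)^2 - 1. \<beta> (b p ** B - B ** b p) (b p)) =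
         (\<Sum>p<CARD('N)^2 - 1. \<beta> (b p) (B ** b p - b p ** B))"
proof -
  define P where "P = {..<CARD('N)^2 - 1}"
  obtain K where K: "\<And>X Y. \<beta> X Y =
      (\<Sum>a\<in>UNIV. \<Sum>b\<in>UNIV. \<Sum>c\<in>UNIV. \<Sum>d\<in>UNIV. X $ a $ b * Y $ c $ d * K a b c d)"
    using assms(2) unfolding matrix_bilinear_def by blast
  have "(\<Sum>p\<in>P. \<beta> (X p) (Y p)) = (\<Sum>a\<in>UNIV. \<Sum>b\<in>UNIV. \<Sum>c\<in>UNIV. \<Sum>d\<in>UNIV.
      (\<Sum>p\<in>P. X p $ a $ b * Y p $ c $ d) * K a b c d)" for X Y :: "nat \<Rightarrow> complex^'N^'N"
    by (simp add: K sum_distrib_right sum.swap[of _ P])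
  then show ?thesis
    unfolding P_def by (simp only: casimir_commutator[OF assms(1)])
qed

section \<open>Derivatives of polynomial functions\<close>

lemma mscale_component [simp]: "mscale t B $ i $ j = t * B $ i $ j"
  by (simp add: mscale_def)

lemma mscale_0 [simp]: "mscale 0 B = 0"
  by (simp add: mscale_def vec_eq_iff)

lemma polyfun_cmult: "p \<in> polyfun \<Longrightarrow> (\<lambda>A. c * p A) \<in> polyfun"
  by (rule pf_mult[OF pf_const])

lemma polyfun_sum:
  "finite I \<Longrightarrow> (\<And>i. i \<in> I \<Longrightarrow> f i \<in> polyfun) \<Longrightarrow> (\<lambda>A. \<Sum>i\<in>I. f i A) \<in> polyfun"
  by (induction I rule: finite_induct) (auto intro: pf_const pf_add)

definition partial_deriv :: "'N \<Rightarrow> 'N \<Rightarrow> (complex^'N^'N \<Rightarrow> complex) \<Rightarrow> complex^'N^'N \<Rightarrow> complex" where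
  "partial_deriv a b p A = deriv (\<lambda>t. p (A + mscale t (matrix_unit a b))) 0"

definition has_gradient ::
    "(complex^'N^'N \<Rightarrow> complex) \<Rightarrow> ('N \<Rightarrow> 'N \<Rightarrow> complex^'N^'N \<Rightarrow> complex) \<Rightarrow> bool" where
  "has_gradient p D \<longleftrightarrow> (\<forall>A B. ((\<lambda>t. p (A + mscale t B)) has_field_derivative
      (\<Sum>a\<in>UNIV. \<Sum>b\<in>UNIV. B $ a $ b * D a b A)) (at 0))"

lemma has_gradientD:
  "has_gradient p D \<Longrightarrow>
    ((\<lambda>t. p (A + mscale t B)) has_field_derivative (\<Sum>a\<in>UNIV. \<Sum>b\<in>UNIV. B $ a $ b * D a b A)) (at 0)"
  unfolding has_gradient_def by blast

lemma has_gradient_partial_deriv_eq: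
  fixes p :: "complex^'N::finite^'N \<Rightarrow> complex"
  assumes "has_gradient p D"
  shows "partial_deriv a b p = D a b"
proof
  fix A
  show "partial_deriv a b p A = D a b A"
    using has_gradientD[OF assms, of A "matrix_unit a b"]
    unfolding partial_deriv_def sum_matrix_unit_expansion by (rule DERIV_imp_deriv)
qed

lemma has_gradient_const: "has_gradient (\<lambda>A. c) (\<lambda>a b A. 0)"
  by (simp add: has_gradient_def)

lemma has_gradient_coord:
  fixes i j :: "'N::finite"
  shows "has_gradient (\<lambda>A. A $ i $ j) (\<lambda>a b A. if a = i \<and> b = j then 1 else 0)"
  unfolding has_gradient_def
proof (intro allI)
  fix A B :: "complex^'N^'N"
  have "((\<lambda>t. A $ i $ j + t * B $ i $ j) has_field_derivative B $ i $ j) (at 0)"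
    by (auto intro!: derivative_eq_intros)
  then show "((\<lambda>t. (A + mscale t B) $ i $ j) has_field_derivative
      (\<Sum>a\<in>UNIV. \<Sum>b\<in>UNIV. B $ a $ b * (if a = i \<and> b = j then 1 else 0))) (at 0)"
    using sum_matrix_unit_expansion[of i j "\<lambda>a b. B $ a $ b"]
    by (simp add: matrix_unit_component mult.commute)
qed

lemma partial_deriv_const: "partial_deriv a b (\<lambda>A :: complex^'N::finite^'N. c) = (\<lambda>A. 0)"
  by (rule has_gradient_partial_deriv_eq[OF has_gradient_const])

lemma partial_deriv_coord:
  "partial_deriv a b (\<lambda>A :: complex^'N::finite^'N. A $ i $ j) = (\<lambda>A. if a = i \<and> b = j then 1 else 0)"
  by (rule has_gradient_partial_deriv_eq[OF has_gradient_coord])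

lemma has_gradient_add:
  fixes p q :: "complex^'N::finite^'N \<Rightarrow> complex"
  assumes "has_gradient p Dp" and "has_gradient q Dq"
  shows "has_gradient (\<lambda>A. p A + q A) (\<lambda>a b A. Dp a b A + Dq a b A)"
  unfolding has_gradient_def
proof (intro allI)
  fix A B :: "complex^'N^'N"
  from DERIV_add[OF has_gradientD[OF assms(1)] has_gradientD[OF assms(2)]] show "((\<lambda>t. p (A + mscale t B) + q (A + mscale t B)) has_field_derivative
      (\<Sum>a\<in>UNIV. \<Sum>b\<in>UNIV. B $ a $ b * (Dp a b A + Dq a b A))) (at 0)"
    by (simp add: distrib_left sum.distrib)
qed

lemma has_gradient_mult:
  fixes p q :: "complex^'N::finite^'N \<Rightarrow> complex"
  assumes "has_gradient p Dp" and "has_gradient q Dq"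
  shows "has_gradient (\<lambda>A. p A * q A) (\<lambda>a b A. Dp a b A * q A + p A * Dq a b A)"
  unfolding has_gradient_def
proof (intro allI)
  fix A B :: "complex^'N^'N"
  from DERIV_mult[OF has_gradientD[OF assms(1)] has_gradientD[OF assms(2)]] have deriv:
    "((\<lambda>t. p (A + mscale t B) * q (A + mscale t B)) has_field_derivative
      (\<Sum>a\<in>UNIV. \<Sum>b\<in>UNIV. B $ a $ b * Dp a b A) * q A + (\<Sum>a\<in>UNIV. \<Sum>b\<in>UNIV. B $ a $ b * Dq a b A) * p A)
      (at 0)"
    by simp
  have eq: "(\<Sum>a\<in>UNIV. \<Sum>b\<in>UNIV. B $ a $ b * (Dp a b A * q A + p A * Dq a b A)) =
      (\<Sum>a\<in>UNIV. \<Sum>b\<in>UNIV. B $ a $ b * Dp a b A) * q A + (\<Sum>a\<in>UNIV. \<Sum>b\<in>UNIV. B $ a $ b * Dq a b A) * p A"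
  proof -
    have "B $ a $ b * (Dp a b A * q A + p A * Dq a b A) = B $ a $ b * Dp a b A * q A + B $ a $ b * Dq a b A * p A"
      for a b by (simp add: algebra_simps)
    then show ?thesis
      by (simp only: sum.distrib sum_distrib_right)
  qed
  show "((\<lambda>t. p (A + mscale t B) * q (A + mscale t B)) has_field_derivative
      (\<Sum>a\<in>UNIV. \<Sum>b\<in>UNIV. B $ a $ b * (Dp a b A * q A + p A * Dq a b A))) (at 0)"
    unfolding eq by (rule deriv)
qed

lemma polyfun_has_gradient:
  fixes p :: "complex^'N::finite^'N \<Rightarrow> complex"
  assumes "p \<in> polyfun"
  shows "has_gradient p (\<lambda>a b. partial_deriv a b p) \<and> (\<forall>a b. partial_deriv a b p \<in> polyfun)"
  using assms
proof (induction rule: polyfun.induct)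
  case (pf_const c)
  show ?case
    by (simp add: partial_deriv_const has_gradient_const polyfun.pf_const)
next
  case (pf_coord i j)
  show ?case
    by (simp add: partial_deriv_coord has_gradient_coord polyfun.pf_const)
next
  case (pf_add p q)
  have gradient: "has_gradient (\<lambda>A. p A + q A)
      (\<lambda>a b A. partial_deriv a b p A + partial_deriv a b q A)"
    using pf_add.IH by (intro has_gradient_add) blast+
  have "partial_deriv a b (\<lambda>A. p A + q A) = (\<lambda>A. partial_deriv a b p A + partial_deriv a b q A)" for a b
    by (rule has_gradient_partial_deriv_eq[OF gradient])
  moreover have "(\<lambda>A. partial_deriv a b p A + partial_deriv a b q A) \<in> polyfun" for a b
    by (intro polyfun.pf_add) (use pf_add.IH in blast)+
  ultimately show ?case
    using gradient by simp
next
  case (pf_mult p q)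
  have gradient: "has_gradient (\<lambda>A. p A * q A)
      (\<lambda>a b A. partial_deriv a b p A * q A + p A * partial_deriv a b q A)"
    using pf_mult.IH by (intro has_gradient_mult) blast+
  have "partial_deriv a b (\<lambda>A. p A * q A) = (\<lambda>A. partial_deriv a b p A * q A + p A * partial_deriv a b q A)" for a b
    by (rule has_gradient_partial_deriv_eq[OF gradient])
  moreover have "(\<lambda>A. partial_deriv a b p A * q A + p A * partial_deriv a b q A) \<in> polyfun" for a b
    by (intro polyfun.pf_add polyfun.pf_mult) (use pf_mult in blast)+
  ultimately show ?case
    using gradient by simp
qed

lemma polyfun_has_field_derivative:
  fixes p :: "complex^'N::finite^'N \<Rightarrow> complex"
  assumes "p \<in> polyfun"
  shows "((\<lambda>t. p (A + mscale t B)) has_field_derivative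
    (\<Sum>a\<in>UNIV. \<Sum>b\<in>UNIV. B $ a $ b * partial_deriv a b p A)) (at 0)"
  using has_gradientD polyfun_has_gradient[OF assms] by blast

lemma polyfun_partial_deriv: "p \<in> polyfun \<Longrightarrow> partial_deriv a b p \<in> polyfun"
  using polyfun_has_gradient by blast

lemma partial_deriv_add:
  assumes "p \<in> polyfun" and "q \<in> polyfun"
  shows "partial_deriv a b (\<lambda>A. p A + q A) = (\<lambda>A. partial_deriv a b p A + partial_deriv a b q A)"
  using assms by (intro has_gradient_partial_deriv_eq has_gradient_add) (blast dest: polyfun_has_gradient)+

lemma partial_deriv_mult:
  assumes "p \<in> polyfun" and "q \<in> polyfun"
  shows "partial_deriv a b (\<lambda>A. p A * q A) =
    (\<lambda>A. partial_deriv a b p A * q A + p A * partial_deriv a b q A)"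
  using assms by (intro has_gradient_partial_deriv_eq has_gradient_mult) (blast dest: polyfun_has_gradient)+

lemma partial_deriv_commute:
  assumes "p \<in> polyfun"
  shows "partial_deriv a b (partial_deriv c d p) = partial_deriv c d (partial_deriv a b p)"
  using assms
proof (induction rule: polyfun.induct)
  case (pf_const c)
  then show ?case
    by (simp add: partial_deriv_const)
next
  case (pf_coord i j)
  then show ?case
    by (simp add: partial_deriv_coord partial_deriv_const)
next
  case (pf_add p q)
  then show ?case
    by (simp add: partial_deriv_add polyfun_partial_deriv)
next
  case (pf_mult p q)
  have expand: "partial_deriv a b (partial_deriv c d (\<lambda>A. p A * q A)) =
      (\<lambda>A. partial_deriv a b (partial_deriv c d p) A * q A + partial_deriv c d p A * partial_deriv a b q A
         + (partial_deriv a b p A * partial_deriv c d q A + p A * partial_deriv a b (partial_deriv c d q) A))"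
    for a b c d
    using pf_mult.hyps
    by (simp add: partial_deriv_mult partial_deriv_add polyfun_partial_deriv polyfun.pf_mult)
  show ?case
    by (simp only: expand pf_mult.IH) (simp add: algebra_simps)
qed

definition polynomial_map :: "(complex^'N^'N \<Rightarrow> ('n \<Rightarrow> 'N) \<Rightarrow> complex) \<Rightarrow> bool" where
  "polynomial_map f \<longleftrightarrow> (\<forall>w. (\<lambda>A. f A w) \<in> polyfun)"

lemma dirderiv_apply: "dirderiv f A B w = deriv (\<lambda>t. f (A + mscale t B) w) 0"
  by (simp add: dirderiv_def)

lemma dirderiv_eq_partial_derivs:
  fixes f :: "complex^'N::finite^'N \<Rightarrow> ('n \<Rightarrow> 'N) \<Rightarrow> complex"
  assumes "polynomial_map f"
  shows "dirderiv f A B w = (\<Sum>a\<in>UNIV. \<Sum>b\<in>UNIV. B $ a $ b * partial_deriv a b (\<lambda>A. f A w) A)"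
  using assms polyfun_has_field_derivative[of "\<lambda>A. f A w"]
  unfolding polynomial_map_def dirderiv_apply by (blast intro: DERIV_imp_deriv)

lemma has_field_derivative_dirderiv:
  fixes f :: "complex^'N::finite^'N \<Rightarrow> ('n \<Rightarrow> 'N) \<Rightarrow> complex"
  assumes "polynomial_map f"
  shows "((\<lambda>t. f (A + mscale t B) w) has_field_derivative dirderiv f A B w) (at 0)"
  using assms polyfun_has_field_derivative[of "\<lambda>A. f A w"]
  unfolding dirderiv_eq_partial_derivs[OF assms] polynomial_map_def by blast

lemma polynomial_map_dirderiv:
  fixes f :: "complex^'N::finite^'N \<Rightarrow> ('n \<Rightarrow> 'N) \<Rightarrow> complex"
  assumes "polynomial_map f"
  shows "polynomial_map (\<lambda>A. dirderiv f A B)"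
proof -
  have "(\<lambda>A. \<Sum>a\<in>UNIV. \<Sum>b\<in>UNIV. B $ a $ b * partial_deriv a b (\<lambda>A. f A w) A) \<in> polyfun" for w
    using assms unfolding polynomial_map_def
    by (intro polyfun_sum polyfun_cmult polyfun_partial_deriv) auto
  then show ?thesis
    unfolding polynomial_map_def dirderiv_eq_partial_derivs[OF assms] by blast
qed

lemma dirderiv_matrix_unit_expansion:
  fixes f :: "complex^'N::finite^'N \<Rightarrow> ('n \<Rightarrow> 'N) \<Rightarrow> complex"
  assumes "polynomial_map f"
  shows "dirderiv f A B w = (\<Sum>a\<in>UNIV. \<Sum>b\<in>UNIV. B $ a $ b * dirderiv f A (matrix_unit a b) w)"
  by (simp add: dirderiv_eq_partial_derivs[OF assms] sum_matrix_unit_expansion)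

lemma dirderiv_add_scaled_direction:
  fixes f :: "complex^'N::finite^'N \<Rightarrow> ('n \<Rightarrow> 'N) \<Rightarrow> complex"
  assumes "polynomial_map f"
  shows "dirderiv f A (B + mscale t C) w = dirderiv f A B w + t * dirderiv f A C w"
  by (simp add: dirderiv_eq_partial_derivs[OF assms] algebra_simps sum.distrib sum_distrib_left)

lemma dirderiv_zero_direction:
  fixes f :: "complex^'N::finite^'N \<Rightarrow> ('n \<Rightarrow> 'N) \<Rightarrow> complex"
  assumes "polynomial_map f"
  shows "dirderiv f A 0 w = 0"
  by (simp add: dirderiv_eq_partial_derivs[OF assms])

lemma second_dirderiv_eq_partial_derivs:
  fixes f :: "complex^'N::finite^'N \<Rightarrow> ('n \<Rightarrow> 'N) \<Rightarrow> complex"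
  assumes "polynomial_map f"
  shows "dirderiv (\<lambda>A. dirderiv f A B) A C w = (\<Sum>a\<in>UNIV. \<Sum>b\<in>UNIV. \<Sum>c\<in>UNIV. \<Sum>d\<in>UNIV.
      B $ a $ b * C $ c $ d * partial_deriv c d (partial_deriv a b (\<lambda>A. f A w)) A)"
proof -
  have poly: "partial_deriv a b (\<lambda>A. f A w) \<in> polyfun" for a b
    using assms unfolding polynomial_map_def by (blast intro: polyfun_partial_deriv)
  have "((\<lambda>t. \<Sum>a\<in>UNIV. \<Sum>b\<in>UNIV. B $ a $ b * partial_deriv a b (\<lambda>A. f A w) (A + mscale t C))
      has_field_derivative (\<Sum>a\<in>UNIV. \<Sum>b\<in>UNIV. B $ a $ b *
         (\<Sum>c\<in>UNIV. \<Sum>d\<in>UNIV. C $ c $ d * partial_deriv c d (partial_deriv a b (\<lambda>A. f A w)) A))) (at 0)"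
    by (intro DERIV_sum DERIV_cmult polyfun_has_field_derivative poly)
  then show ?thesis
    unfolding dirderiv_apply[of "\<lambda>A. dirderiv f A B"] dirderiv_eq_partial_derivs[OF assms]
    by (simp add: DERIV_imp_deriv sum_distrib_left mult.assoc)
qed

lemma second_dirderiv_commute:
  fixes f :: "complex^'N::finite^'N \<Rightarrow> ('n \<Rightarrow> 'N) \<Rightarrow> complex"
  assumes "polynomial_map f"
  shows "dirderiv (\<lambda>A. dirderiv f A B) A C w = dirderiv (\<lambda>A. dirderiv f A C) A B w"
proof -
  have "(\<lambda>A. f A w) \<in> polyfun"
    using assms unfolding polynomial_map_def by blast
  then show ?thesis
    unfolding second_dirderiv_eq_partial_derivs[OF assms]
    by (subst sum_swap_pairs) (simp add: partial_deriv_commute mult.commute)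
qed

lemma matrix_bilinear_second_dirderiv:
  fixes f :: "complex^'N::finite^'N \<Rightarrow> ('n \<Rightarrow> 'N) \<Rightarrow> complex"
  assumes "polynomial_map f"
  shows "matrix_bilinear (\<lambda>B C. dirderiv (\<lambda>A. dirderiv f A B) A C w)"
  unfolding matrix_bilinear_def second_dirderiv_eq_partial_derivs[OF assms]
  by (rule exI[of _ "\<lambda>a b c d. partial_deriv c d (partial_deriv a b (\<lambda>A. f A w)) A"]) simp

lemma act_on_commute:
  assumes "i \<noteq> j"
  shows "act_on M i (act_on L j v) = act_on L j (act_on M i v)"
proof
  fix w
  have "act_on M i (act_on L j v) w = (\<Sum>k\<in>UNIV. \<Sum>l\<in>UNIV. M $ w i $ k * (L $ w j $ l * v (w(i := k, j := l))))"
    using assms by (simp add: act_on_def sum_distrib_left)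
  also have "\<dots> = (\<Sum>l\<in>UNIV. \<Sum>k\<in>UNIV. M $ w i $ k * (L $ w j $ l * v (w(i := k, j := l))))"
    by (rule sum.swap)
  also have "\<dots> = act_on L j (act_on M i v) w"
    using assms by (simp add: act_on_def sum_distrib_left fun_upd_twist mult_ac)
  finally show "act_on M i (act_on L j v) w = act_on L j (act_on M i v) w" .
qed

lemma act_on_act_on: "act_on M i (act_on L i v) = act_on (M ** L) i v"
proof
  fix w
  have "act_on M i (act_on L i v) w = (\<Sum>k\<in>UNIV. \<Sum>l\<in>UNIV. M $ w i $ k * (L $ k $ l * v (w(i := l))))"
    by (simp add: act_on_def sum_distrib_left)
  also have "\<dots> = (\<Sum>l\<in>UNIV. \<Sum>k\<in>UNIV. M $ w i $ k * (L $ k $ l * v (w(i := l))))"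
    by (rule sum.swap)
  also have "\<dots> = act_on (M ** L) i v w"
    by (simp add: act_on_def matrix_matrix_mult_def sum_distrib_left sum_distrib_right mult_ac)
  finally show "act_on M i (act_on L i v) w = act_on (M ** L) i v w" .
qed

lemma act_on_diff_matrix: "act_on (M - L) i v w = act_on M i v w - act_on L i v w"
  by (simp add: act_on_def left_diff_distrib sum_subtractf)

lemma act_on_add: "act_on M i (\<lambda>u. g u + h u) w = act_on M i g w + act_on M i h w"
  by (simp add: act_on_def distrib_left sum.distrib)

lemma act_on_diff: "act_on M i (\<lambda>u. g u - h u) w = act_on M i g w - act_on M i h w"
  by (simp add: act_on_def right_diff_distrib sum_subtractf)

lemma act_on_cmult: "act_on M i (\<lambda>u. c * h u) w = c * act_on M i h w"
  by (simp add: act_on_def sum_distrib_left mult_ac)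

lemma act_on_sum: "act_on M i (\<lambda>u. \<Sum>j\<in>J. h j u) w = (\<Sum>j\<in>J. act_on M i (h j) w)"
  by (simp add: act_on_def sum_distrib_left sum.swap[of _ J])

lemma act_on_matrix_unit: "act_on (matrix_unit a b) i v w = (if w i = a then v (w(i := b)) else 0)"
  by (simp add: act_on_def matrix_unit_component if_distrib[of "\<lambda>x. x * _"] sum_if_eq_conj cong: if_cong)

lemma act_on_matrix_unit_expansion:
  "act_on M i v w = (\<Sum>a\<in>UNIV. \<Sum>b\<in>UNIV. M $ a $ b * act_on (matrix_unit a b) i v w)"
proof -
  have "(\<Sum>b\<in>UNIV. M $ a $ b * (if w i = a then v (w(i := b)) else 0)) =
      (if w i = a then \<Sum>b\<in>UNIV. M $ a $ b * v (w(i := b)) else 0)" for a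
    by (cases "w i = a") simp_all
  then show ?thesis
    by (simp add: act_on_matrix_unit) (simp add: act_on_def)
qed

lemma sum_act_on_commutator:
  fixes v :: "('n::finite \<Rightarrow> 'N::finite) \<Rightarrow> complex"
  shows "(\<Sum>j\<in>UNIV. act_on M i (act_on B j v) w) =
    (\<Sum>j\<in>UNIV. act_on B j (act_on M i v) w) + act_on (M ** B - B ** M) i v w"
proof -
  have "(\<Sum>j\<in>UNIV. act_on M i (act_on B j v) w) =
      act_on M i (act_on B i v) w + (\<Sum>j\<in>UNIV - {i}. act_on M i (act_on B j v) w)"
    by (rule sum.remove) auto
  also have "(\<Sum>j\<in>UNIV - {i}. act_on M i (act_on B j v) w) = (\<Sum>j\<in>UNIV - {i}. act_on B j (act_on M i v) w)"
    by (rule sum.cong) (auto simp: act_on_commute)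
  also have "act_on M i (act_on B i v) w = act_on B i (act_on M i v) w + act_on (M ** B - B ** M) i v w"
    by (simp add: act_on_act_on act_on_diff_matrix)
  finally show ?thesis
    by (simp add: sum.remove[of UNIV i])
qed

lemma perm_act_id: "perm_act id v = v"
  by (simp add: perm_act_def)

lemma perm_act_perm_act: "perm_act \<sigma> (perm_act \<tau> v) = perm_act (\<sigma> \<circ> \<tau>) v"
  by (simp add: perm_act_def comp_assoc)

lemma act_on_perm_act:
  fixes \<sigma> :: "'n \<Rightarrow> 'n" and v :: "('n \<Rightarrow> 'N::finite) \<Rightarrow> complex"
  assumes "bij \<sigma>"
  shows "act_on B i (perm_act \<sigma> v) = perm_act \<sigma> (act_on B (inv \<sigma> i) v)"
proof
  fix w
  have "\<sigma> (inv \<sigma> i) = i"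
    using assms by (simp add: bij_is_surj surj_f_inv_f)
  moreover have "w(i := k) \<circ> \<sigma> = (w \<circ> \<sigma>)(inv \<sigma> i := k)" for k :: 'N
    using assms by (auto simp: fun_eq_iff bij_inv_eq_iff)
  ultimately show "act_on B i (perm_act \<sigma> v) w = perm_act \<sigma> (act_on B (inv \<sigma> i) v) w"
    by (simp add: act_on_def perm_act_def)
qed

lemma perm_act_conj_act_on:
  assumes "\<sigma> permutes UNIV"
  shows "perm_act \<sigma> (act_on B i (perm_act (inv \<sigma>) v)) = act_on B (\<sigma> i) v"
proof -
  have "bij (inv \<sigma>)" and "inv (inv \<sigma>) = \<sigma>" and "\<sigma> \<circ> inv \<sigma> = id"
    using assms by (simp_all add: bij_imp_bij_inv permutes_bij permutes_inv_inv permutes_inv_o)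
  then show ?thesis
    by (simp add: act_on_perm_act perm_act_perm_act perm_act_id)
qed

lemma casimir_act_on_two_factors:
  fixes b :: "nat \<Rightarrow> complex^'N::finite^'N" and v :: "('n \<Rightarrow> 'N) \<Rightarrow> complex"
  assumes "orthonormal_sl_basis b" and "i \<noteq> j"
  shows "(\<Sum>p<CARD('N)^2 - 1. act_on (b p) j (act_on (b p) i v) w) =
    v (w \<circ> Transposition.transpose i j) - v w / of_nat CARD('N)"
proof -
  define P where "P = {..<CARD('N)^2 - 1}"
  have "(\<Sum>p\<in>P. act_on (b p) j (act_on (b p) i v) w) =
      (\<Sum>k\<in>UNIV. \<Sum>l\<in>UNIV. (\<Sum>p\<in>P. b p $ w j $ k * b p $ w i $ l) * v (w(j := k, i := l)))"
    using assms(2) by (simp add: act_on_def sum_distrib_left sum_distrib_right sum.swap[of _ P] mult.assoc)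
  also have "\<dots> = (\<Sum>k\<in>UNIV. \<Sum>l\<in>UNIV. ((if w j = l \<and> k = w i then 1 else 0)
      - (if w j = k \<and> w i = l then 1 else 0) / of_nat CARD('N)) * v (w(j := k, i := l)))"
    unfolding P_def casimir_identity[OF assms(1)] ..
  also have "\<dots> = v (w(j := w i, i := w j)) - v w / of_nat CARD('N)"
    by (simp add: left_diff_distrib sum_subtractf sum_divide_distrib[symmetric] if_distrib[of "\<lambda>x. x * _"]
        sum_if_eq_conj cong: if_cong)
  also have "w(j := w i, i := w j) = w \<circ> Transposition.transpose i j"
    using assms(2) by (auto simp: fun_eq_iff Transposition.transpose_def)
  finally show ?thesis
    unfolding P_def .
qed

section \<open>The invariant space V_N\<close>

lemma VN_polynomial_map: "f \<in> VN \<Longrightarrow> polynomial_map f"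
  by (simp add: VN_def polynomial_map_def)

lemma VN_invariant:
  "f \<in> VN \<Longrightarrow> A \<in> sl \<Longrightarrow> B \<in> sl \<Longrightarrow>
    dirderiv f A (B ** A - A ** B) w = (\<Sum>i\<in>UNIV. act_on B i (f A) w)"
  unfolding VN_def by (simp add: sum_fun_apply)

lemma VN_intro:
  assumes "polynomial_map g"
    and "\<And>A B w. A \<in> sl \<Longrightarrow> B \<in> sl \<Longrightarrow>
      dirderiv g A (B ** A - A ** B) w = (\<Sum>i\<in>UNIV. act_on B i (g A) w)"
  shows "g \<in> VN"
  using assms unfolding VN_def polynomial_map_def by (auto simp: sum_fun_apply)

lemma sl_add_mscale: "A \<in> sl \<Longrightarrow> C \<in> sl \<Longrightarrow> A + mscale t C \<in> sl"
  unfolding sl_def mtr_def by (simp add: sum.distrib sum_distrib_left[symmetric])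

lemma commutator_add_mscale:
  "B ** (A + mscale t C) - (A + mscale t C) ** B = (B ** A - A ** B) + mscale t (B ** C - C ** B)"
  by (simp add: vec_eq_iff matrix_matrix_mult_def algebra_simps sum.distrib sum_subtractf sum_distrib_left)

(* Derivative of the invariance condition along the line A + t C inside sl. *)
lemma VN_invariant_derivative:
  assumes f: "f \<in> VN" and A: "A \<in> sl" and B: "B \<in> sl" and C: "C \<in> sl"
  shows "dirderiv f A (B ** C - C ** B) w + dirderiv (\<lambda>A'. dirderiv f A' (B ** A - A ** B)) A C w
      = (\<Sum>j\<in>UNIV. act_on B j (dirderiv f A C) w)"
proof -
  have pf: "polynomial_map f"
    using f by (rule VN_polynomial_map)
  define D where "D = B ** A - A ** B"
  define E where "E = B ** C - C ** B"
  have line: "dirderiv f (A + mscale t C) D w + t * dirderiv f (A + mscale t C) E w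
      = (\<Sum>j\<in>UNIV. \<Sum>k\<in>UNIV. B $ w j $ k * f (A + mscale t C) (w(j := k)))" for t
    using VN_invariant[OF f sl_add_mscale[OF A C] B, of t w]
    unfolding commutator_add_mscale dirderiv_add_scaled_direction[OF pf] D_def E_def
    by (simp add: act_on_def)
  have "((\<lambda>t. dirderiv f (A + mscale t C) D w) has_field_derivative
      dirderiv (\<lambda>A'. dirderiv f A' D) A C w) (at 0)"
    by (rule has_field_derivative_dirderiv[OF polynomial_map_dirderiv[OF pf]])
  moreover have "((\<lambda>t. t * dirderiv f (A + mscale t C) E w) has_field_derivative dirderiv f A E w) (at 0)"
    using DERIV_mult[OF DERIV_ident has_field_derivative_dirderiv[OF polynomial_map_dirderiv[OF pf]]]
    by simp
  ultimately have "((\<lambda>t. \<Sum>j\<in>UNIV. \<Sum>k\<in>UNIV. B $ w j $ k * f (A + mscale t C) (w(j := k)))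
      has_field_derivative dirderiv (\<lambda>A'. dirderiv f A' D) A C w + dirderiv f A E w) (at 0)"
    unfolding line[symmetric] by (rule DERIV_add)
  moreover have "((\<lambda>t. \<Sum>j\<in>UNIV. \<Sum>k\<in>UNIV. B $ w j $ k * f (A + mscale t C) (w(j := k)))
      has_field_derivative (\<Sum>j\<in>UNIV. \<Sum>k\<in>UNIV. B $ w j $ k * dirderiv f A C (w(j := k)))) (at 0)"
    by (intro DERIV_sum DERIV_cmult has_field_derivative_dirderiv[OF pf])
  ultimately show ?thesis
    unfolding D_def E_def by (simp add: DERIV_unique act_on_def add.commute)
qed

lemma dirderiv_Pop: "dirderiv (Pop \<sigma> f) A C = perm_act \<sigma> (dirderiv f A C)"
  by (simp add: dirderiv_def Pop_def perm_act_def fun_eq_iff)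

lemma Pop_VN:
  fixes f :: "complex^'N::finite^'N \<Rightarrow> ('n::finite \<Rightarrow> 'N) \<Rightarrow> complex"
  assumes f: "f \<in> VN" and \<sigma>: "\<sigma> permutes UNIV"
  shows "Pop \<sigma> f \<in> VN"
proof (rule VN_intro)
  show "polynomial_map (Pop \<sigma> f)"
    using VN_polynomial_map[OF f] unfolding polynomial_map_def Pop_def perm_act_def by simp
  fix A B :: "complex^'N^'N" and w :: "'n \<Rightarrow> 'N"
  assume A: "A \<in> sl" and B: "B \<in> sl"
  have "(\<Sum>i\<in>UNIV. act_on B i (Pop \<sigma> f A) w) = (\<Sum>i\<in>UNIV. act_on B (inv \<sigma> i) (f A) (w \<circ> \<sigma>))"
    by (simp add: Pop_def act_on_perm_act[OF permutes_bij[OF \<sigma>]]) (simp add: perm_act_def)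
  also have "\<dots> = (\<Sum>i\<in>UNIV. act_on B i (f A) (w \<circ> \<sigma>))"
    using sum.permute[OF permutes_inv[OF \<sigma>], of "\<lambda>i. act_on B i (f A) (w \<circ> \<sigma>)"] by (simp add: comp_def)
  also have "\<dots> = dirderiv (Pop \<sigma> f) A (B ** A - A ** B) w"
    by (simp add: dirderiv_Pop perm_act_def VN_invariant[OF f A B])
  finally show "dirderiv (Pop \<sigma> f) A (B ** A - A ** B) w = (\<Sum>i\<in>UNIV. act_on B i (Pop \<sigma> f A) w)" ..
qed

lemma dirderiv_Xop:
  fixes f :: "complex^'N::finite^'N \<Rightarrow> ('n \<Rightarrow> 'N) \<Rightarrow> complex"
  assumes pf: "polynomial_map f"
  shows "dirderiv (Xop i f) A C w = act_on C i (f A) w + act_on A i (dirderiv f A C) w"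
proof -
  have "((\<lambda>t. (A + mscale t C) $ w i $ k) has_field_derivative C $ w i $ k) (at 0)" for k
    by (auto intro!: derivative_eq_intros)
  then have "((\<lambda>t. \<Sum>k\<in>UNIV. (A + mscale t C) $ w i $ k * f (A + mscale t C) (w(i := k)))
      has_field_derivative (\<Sum>k\<in>UNIV. C $ w i $ k * f A (w(i := k)) + dirderiv f A C (w(i := k)) * A $ w i $ k))
      (at 0)"
    using DERIV_mult[OF _ has_field_derivative_dirderiv[OF pf]] by (intro DERIV_sum) fastforce
  then show ?thesis
    unfolding dirderiv_apply Xop_def act_on_def
    by (simp add: DERIV_imp_deriv sum.distrib mult.commute)
qed

lemma Xop_VN:
  fixes f :: "complex^'N::finite^'N \<Rightarrow> ('n::finite \<Rightarrow> 'N) \<Rightarrow> complex"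
  assumes f: "f \<in> VN"
  shows "Xop i f \<in> VN"
proof (rule VN_intro)
  have pf: "polynomial_map f"
    using f by (rule VN_polynomial_map)
  then show "polynomial_map (Xop i f)"
    unfolding polynomial_map_def Xop_def act_on_def by (auto intro!: polyfun_sum pf_mult pf_coord)
  fix A B :: "complex^'N^'N" and w :: "'n \<Rightarrow> 'N"
  assume A: "A \<in> sl" and B: "B \<in> sl"
  have "dirderiv f A (B ** A - A ** B) = (\<lambda>u. \<Sum>j\<in>UNIV. act_on B j (f A) u)"
    using VN_invariant[OF f A B] by blast
  then have "dirderiv (Xop i f) A (B ** A - A ** B) w =
      act_on (B ** A - A ** B) i (f A) w + (\<Sum>j\<in>UNIV. act_on A i (act_on B j (f A)) w)"
    by (simp add: dirderiv_Xop[OF pf] act_on_sum)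
  also have "\<dots> = (\<Sum>j\<in>UNIV. act_on B j (act_on A i (f A)) w)"
    by (simp add: sum_act_on_commutator act_on_diff_matrix)
  finally show "dirderiv (Xop i f) A (B ** A - A ** B) w = (\<Sum>j\<in>UNIV. act_on B j (Xop i f A) w)"
    by (simp add: Xop_def)
qed

lemma Yop_apply:
  fixes f :: "complex^'N::finite^'N \<Rightarrow> ('n::finite \<Rightarrow> 'N) \<Rightarrow> complex"
  shows "Yop b i f A w = of_nat CARD('N) / of_nat CARD('n) *
    (\<Sum>p<CARD('N)^2 - 1. act_on (b p) i (dirderiv f A (b p)) w)"
  by (simp only: Yop_def sum_fun_apply)

lemma polynomial_map_Yop:
  fixes f :: "complex^'N::finite^'N \<Rightarrow> ('n::finite \<Rightarrow> 'N) \<Rightarrow> complex"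
  assumes "polynomial_map f"
  shows "polynomial_map (Yop b i f)"
proof -
  have dirderiv_poly: "(\<lambda>A. dirderiv f A B u) \<in> polyfun" for B u
    using polynomial_map_dirderiv[OF assms] unfolding polynomial_map_def by blast
  show ?thesis
    unfolding polynomial_map_def Yop_apply act_on_def
    by (intro allI polyfun_cmult polyfun_sum) (auto intro: dirderiv_poly)
qed

lemma dirderiv_Yop:
  fixes f :: "complex^'N::finite^'N \<Rightarrow> ('n::finite \<Rightarrow> 'N) \<Rightarrow> complex"
  assumes "polynomial_map f"
  shows "dirderiv (Yop b i f) A C w = of_nat CARD('N) / of_nat CARD('n) *
    (\<Sum>p<CARD('N)^2 - 1. act_on (b p) i (dirderiv (\<lambda>A. dirderiv f A (b p)) A C) w)"
proof -
  have "((\<lambda>t. of_nat CARD('N) / of_nat CARD('n) * (\<Sum>p<CARD('N)^2 - 1. \<Sum>k\<in>UNIV.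
        b p $ w i $ k * dirderiv f (A + mscale t C) (b p) (w(i := k))))
      has_field_derivative of_nat CARD('N) / of_nat CARD('n) * (\<Sum>p<CARD('N)^2 - 1. \<Sum>k\<in>UNIV.
        b p $ w i $ k * dirderiv (\<lambda>A. dirderiv f A (b p)) A C (w(i := k)))) (at 0)"
    by (intro DERIV_cmult DERIV_sum has_field_derivative_dirderiv polynomial_map_dirderiv assms)
  then show ?thesis
    unfolding dirderiv_apply[of "Yop b i f"] Yop_apply act_on_def by (rule DERIV_imp_deriv)
qed

lemma matrix_bilinear_act_on_dirderiv:
  fixes f :: "complex^'N::finite^'N \<Rightarrow> ('n \<Rightarrow> 'N) \<Rightarrow> complex"
  assumes "polynomial_map f"
  shows "matrix_bilinear (\<lambda>X Y. act_on X i (dirderiv f A Y) w)"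
proof -
  have expansion: "act_on X i (dirderiv f A Y) w = (\<Sum>a\<in>UNIV. \<Sum>b\<in>UNIV. \<Sum>c\<in>UNIV. \<Sum>d\<in>UNIV.
      X $ a $ b * Y $ c $ d * act_on (matrix_unit a b) i (dirderiv f A (matrix_unit c d)) w)" for X Y
  proof -
    have "dirderiv f A Y = (\<lambda>u. \<Sum>c\<in>UNIV. \<Sum>d\<in>UNIV. Y $ c $ d * dirderiv f A (matrix_unit c d) u)"
      using dirderiv_matrix_unit_expansion[OF assms] by blast
    then have "act_on X i (dirderiv f A Y) w = (\<Sum>a\<in>UNIV. \<Sum>b\<in>UNIV. X $ a $ b * act_on (matrix_unit a b) i
        (\<lambda>u. \<Sum>c\<in>UNIV. \<Sum>d\<in>UNIV. Y $ c $ d * dirderiv f A (matrix_unit c d) u) w)"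
      using act_on_matrix_unit_expansion[of X i "dirderiv f A Y" w] by simp
    then show ?thesis
      by (simp only: act_on_sum act_on_cmult sum_distrib_left mult.assoc)
  qed
  show ?thesis
    unfolding matrix_bilinear_def
    by (intro exI[of _ "\<lambda>a b c d. act_on (matrix_unit a b) i (dirderiv f A (matrix_unit c d)) w"] allI)
      (rule expansion)
qed

lemma act_on_second_dirderiv_commutator:
  fixes f :: "complex^'N::finite^'N \<Rightarrow> ('n::finite \<Rightarrow> 'N) \<Rightarrow> complex"
  assumes f: "f \<in> VN" and A: "A \<in> sl" and B: "B \<in> sl" and C: "C \<in> sl"
  shows "act_on C i (dirderiv (\<lambda>A. dirderiv f A C) A (B ** A - A ** B)) w =
    (\<Sum>j\<in>UNIV. act_on B j (act_on C i (dirderiv f A C)) w) + act_on (C ** B - B ** C) i (dirderiv f A C) w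
    - act_on C i (dirderiv f A (B ** C - C ** B)) w"
proof -
  have "dirderiv (\<lambda>A. dirderiv f A C) A (B ** A - A ** B) =
      (\<lambda>u. (\<Sum>j\<in>UNIV. act_on B j (dirderiv f A C) u) - dirderiv f A (B ** C - C ** B) u)"
    using VN_invariant_derivative[OF f A B C] second_dirderiv_commute[OF VN_polynomial_map[OF f]]
    by (simp add: fun_eq_iff eq_diff_eq add.commute)
  then show ?thesis
    by (simp add: act_on_diff act_on_sum sum_act_on_commutator)
qed

lemma Yop_VN:
  fixes f :: "complex^'N::finite^'N \<Rightarrow> ('n::finite \<Rightarrow> 'N) \<Rightarrow> complex"
  assumes f: "f \<in> VN" and b: "orthonormal_sl_basis b"
  shows "Yop b i f \<in> VN"
proof (rule VN_intro)
  have pf: "polynomial_map f"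
    using f by (rule VN_polynomial_map)
  then show "polynomial_map (Yop b i f)"
    by (rule polynomial_map_Yop)
  fix A B :: "complex^'N^'N" and w :: "'n \<Rightarrow> 'N"
  assume A: "A \<in> sl" and B: "B \<in> sl"
  define P where "P = {..<CARD('N)^2 - 1}"
  define c where "c = (of_nat CARD('N) / of_nat CARD('n) :: complex)"
  have "b p \<in> sl" if "p \<in> P" for p
    using b that unfolding orthonormal_sl_basis_def P_def by auto
  then have "dirderiv (Yop b i f) A (B ** A - A ** B) w = c * (\<Sum>p\<in>P.
      (\<Sum>j\<in>UNIV. act_on B j (act_on (b p) i (dirderiv f A (b p))) w)
      + act_on (b p ** B - B ** b p) i (dirderiv f A (b p)) w
      - act_on (b p) i (dirderiv f A (B ** b p - b p ** B)) w)"
    unfolding dirderiv_Yop[OF pf] c_def P_def[symmetric]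
    by (simp add: act_on_second_dirderiv_commutator[OF f A B])
  also have "\<dots> = c * (\<Sum>p\<in>P. \<Sum>j\<in>UNIV. act_on B j (act_on (b p) i (dirderiv f A (b p))) w)"
    using casimir_ad_invariant[OF b matrix_bilinear_act_on_dirderiv[OF pf, of i A w], of B]
    unfolding P_def[symmetric] by (simp add: sum.distrib sum_subtractf)
  also have "\<dots> = (\<Sum>j\<in>UNIV. act_on B j (Yop b i f A) w)"
  proof -
    have "Yop b i f A = (\<lambda>u. c * (\<Sum>p\<in>P. act_on (b p) i (dirderiv f A (b p)) u))"
      unfolding c_def P_def by (rule ext) (rule Yop_apply)
    then show ?thesis
      by (simp only: act_on_cmult act_on_sum sum_distrib_left[symmetric] sum.swap[of _ P])
  qed
  finally show "dirderiv (Yop b i f) A (B ** A - A ** B) w = (\<Sum>j\<in>UNIV. act_on B j (Yop b i f A) w)" .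
qed

section \<open>Relations of the rational Cherednik algebra\<close>

lemma Pop_id: "Pop id f = f"
  by (simp add: Pop_def perm_act_id)

lemma Pop_comp: "Pop (\<sigma> \<circ> \<tau>) f = Pop \<sigma> (Pop \<tau> f)"
  by (simp add: Pop_def perm_act_perm_act)

lemma Pop_conj_Xop:
  assumes "\<sigma> permutes UNIV"
  shows "Pop \<sigma> (Xop i (Pop (inv \<sigma>) f)) = Xop (\<sigma> i) f"
  by (simp add: Pop_def Xop_def perm_act_conj_act_on[OF assms])

lemma Pop_conj_Yop:
  fixes f :: "complex^'N::finite^'N \<Rightarrow> ('n::finite \<Rightarrow> 'N) \<Rightarrow> complex"
  assumes "\<sigma> permutes UNIV"
  shows "Pop \<sigma> (Yop b i (Pop (inv \<sigma>) f)) = Yop b (\<sigma> i) f"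
proof (intro ext)
  fix A w
  have conj: "act_on B i (perm_act (inv \<sigma>) v) (w \<circ> \<sigma>) = act_on B (\<sigma> i) v w"
    for B and v :: "('n \<Rightarrow> 'N) \<Rightarrow> complex"
    using perm_act_conj_act_on[OF assms, of B i v] by (simp add: perm_act_def fun_eq_iff)
  have "Pop \<sigma> (Yop b i (Pop (inv \<sigma>) f)) A w = Yop b i (Pop (inv \<sigma>) f) A (w \<circ> \<sigma>)"
    by (simp add: Pop_def perm_act_def)
  also have "\<dots> = Yop b (\<sigma> i) f A w"
    by (simp only: Yop_apply dirderiv_Pop conj)
  finally show "Pop \<sigma> (Yop b i (Pop (inv \<sigma>) f)) A w = Yop b (\<sigma> i) f A w" .
qed

lemma sum_Xop_eq_0:
  fixes f :: "complex^'N::finite^'N \<Rightarrow> ('n::finite \<Rightarrow> 'N) \<Rightarrow> complex"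
  assumes f: "f \<in> VN" and A: "A \<in> sl"
  shows "(\<Sum>i\<in>UNIV. Xop i f) A w = 0"
proof -
  have "dirderiv f A (A ** A - A ** A) w = (\<Sum>i\<in>UNIV. act_on A i (f A) w)"
    by (rule VN_invariant[OF f A A])
  then show ?thesis
    by (simp add: sum_fun_apply Xop_def dirderiv_zero_direction[OF VN_polynomial_map[OF f]])
qed

lemma casimir_second_dirderiv_eq_0:
  fixes f :: "complex^'N::finite^'N \<Rightarrow> ('n \<Rightarrow> 'N) \<Rightarrow> complex"
  assumes pf: "polynomial_map f" and b: "orthonormal_sl_basis b"
  shows "(\<Sum>p<CARD('N)^2 - 1. dirderiv (\<lambda>A'. dirderiv f A' (b p ** A - A ** b p)) A (b p) w) = 0"
proof -
  define \<beta> where "\<beta> X Y = dirderiv (\<lambda>A'. dirderiv f A' X) A Y w" for X Y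
  have bilinear: "matrix_bilinear \<beta>"
    unfolding \<beta>_def by (rule matrix_bilinear_second_dirderiv[OF pf])
  have "\<beta> (b p) (A ** b p - b p ** A) = - \<beta> (b p ** A - A ** b p) (b p)" for p
  proof -
    have "\<beta> (b p) (A ** b p - b p ** A) = \<beta> (A ** b p - b p ** A) (b p)"
      unfolding \<beta>_def by (rule second_dirderiv_commute[OF pf])
    also have "\<dots> = \<beta> (- (b p ** A - A ** b p)) (b p)"
      by simp
    also have "\<dots> = - \<beta> (b p ** A - A ** b p) (b p)"
      by (rule matrix_bilinear_uminus_left[OF bilinear])
    finally show ?thesis .
  qed
  (* ad-invariance of the Casimir tensor and symmetry of the Hessian make the sum its own negative *)
  then have "(\<Sum>p<CARD('N)^2 - 1. \<beta> (b p ** A - A ** b p) (b p)) =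
      - (\<Sum>p<CARD('N)^2 - 1. \<beta> (b p ** A - A ** b p) (b p))"
    using casimir_ad_invariant[OF b bilinear, of A] by (simp add: sum_negf)
  then show ?thesis
    unfolding \<beta>_def by simp
qed

lemma sum_Yop_eq_0:
  fixes f :: "complex^'N::finite^'N \<Rightarrow> ('n::finite \<Rightarrow> 'N) \<Rightarrow> complex"
  assumes f: "f \<in> VN" and b: "orthonormal_sl_basis b" and A: "A \<in> sl"
  shows "(\<Sum>i\<in>UNIV. Yop b i f) A w = 0"
proof -
  define P where "P = {..<CARD('N)^2 - 1}"
  define c where "c = (of_nat CARD('N) / of_nat CARD('n) :: complex)"
  have pf: "polynomial_map f"
    using f by (rule VN_polynomial_map)
  have inner: "(\<Sum>i\<in>UNIV. act_on (b p) i (dirderiv f A (b p)) w) =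
      dirderiv (\<lambda>A'. dirderiv f A' (b p ** A - A ** b p)) A (b p) w" if "p \<in> P" for p
  proof -
    have "b p \<in> sl"
      using b that unfolding orthonormal_sl_basis_def P_def by auto
    then show ?thesis
      using VN_invariant_derivative[OF f A, of "b p" "b p" w] by (simp add: dirderiv_zero_direction[OF pf])
  qed
  have "(\<Sum>i\<in>UNIV. Yop b i f) A w = c * (\<Sum>p\<in>P. \<Sum>i\<in>UNIV. act_on (b p) i (dirderiv f A (b p)) w)"
    unfolding sum_fun_apply Yop_apply c_def P_def
    by (simp only: sum_distrib_left[symmetric] sum.swap[of _ UNIV])
  also have "\<dots> = c * (\<Sum>p\<in>P. dirderiv (\<lambda>A'. dirderiv f A' (b p ** A - A ** b p)) A (b p) w)"
    by (simp add: inner)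
  also have "\<dots> = 0"
    unfolding P_def casimir_second_dirderiv_eq_0[OF pf b] by simp
  finally show ?thesis .
qed

lemma Xop_commute: "Xop i (Xop j f) = Xop j (Xop i f)"
  by (cases "i = j") (simp_all add: Xop_def act_on_commute)

lemma Yop_Yop_apply:
  fixes f :: "complex^'N::finite^'N \<Rightarrow> ('n::finite \<Rightarrow> 'N) \<Rightarrow> complex"
  assumes "polynomial_map f"
  shows "Yop b i (Yop b j f) A w = (of_nat CARD('N) / of_nat CARD('n))^2 * (\<Sum>p<CARD('N)^2 - 1. \<Sum>q<CARD('N)^2 - 1.
     act_on (b p) i (act_on (b q) j (dirderiv (\<lambda>A. dirderiv f A (b q)) A (b p))) w)"
proof -
  have "dirderiv (Yop b j f) A C = (\<lambda>u. of_nat CARD('N) / of_nat CARD('n) *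
      (\<Sum>q<CARD('N)^2 - 1. act_on (b q) j (dirderiv (\<lambda>A. dirderiv f A (b q)) A C) u))" for C
    using dirderiv_Yop[OF assms] by blast
  then show ?thesis
    by (simp only: Yop_apply act_on_cmult act_on_sum sum_distrib_left power2_eq_square mult.assoc)
qed

lemma Yop_commute:
  fixes f :: "complex^'N::finite^'N \<Rightarrow> ('n::finite \<Rightarrow> 'N) \<Rightarrow> complex"
  assumes pf: "polynomial_map f"
  shows "Yop b i (Yop b j f) A w = Yop b j (Yop b i f) A w"
proof (cases "i = j")
  case False
  have "dirderiv (\<lambda>A. dirderiv f A (b p)) A (b q) = dirderiv (\<lambda>A. dirderiv f A (b q)) A (b p)" for p q
    by (rule ext) (rule second_dirderiv_commute[OF pf])
  then have "act_on (b q) j (act_on (b p) i (dirderiv (\<lambda>A. dirderiv f A (b p)) A (b q))) w =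
      act_on (b p) i (act_on (b q) j (dirderiv (\<lambda>A. dirderiv f A (b q)) A (b p))) w" for p q
    by (simp add: act_on_commute[OF False])
  then show ?thesis
    unfolding Yop_Yop_apply[OF pf] by (subst sum.swap) simp
qed simp

lemma Xop_Yop_commutator:
  fixes f :: "complex^'N::finite^'N \<Rightarrow> ('n::finite \<Rightarrow> 'N) \<Rightarrow> complex"
  assumes pf: "polynomial_map f" and b: "orthonormal_sl_basis b" and ij: "i \<noteq> j"
  shows "Xop i (Yop b j f) A w - Yop b j (Xop i f) A w =
     1 / of_nat CARD('n) * f A w - of_nat CARD('N) / of_nat CARD('n) * f A (w \<circ> Transposition.transpose i j)"
proof -
  define P where "P = {..<CARD('N)^2 - 1}"
  define c where "c = (of_nat CARD('N) / of_nat CARD('n) :: complex)"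
  have "Yop b j f A = (\<lambda>u. c * (\<Sum>p\<in>P. act_on (b p) j (dirderiv f A (b p)) u))"
    unfolding c_def P_def by (rule ext) (rule Yop_apply)
  then have X_Y: "Xop i (Yop b j f) A w = c * (\<Sum>p\<in>P. act_on A i (act_on (b p) j (dirderiv f A (b p))) w)"
    unfolding Xop_def by (simp only: act_on_cmult act_on_sum)
  have "dirderiv (Xop i f) A C = (\<lambda>u. act_on C i (f A) u + act_on A i (dirderiv f A C) u)" for C
    using dirderiv_Xop[OF pf] by blast
  then have Y_X: "Yop b j (Xop i f) A w = c * (\<Sum>p\<in>P. act_on (b p) j (act_on (b p) i (f A)) w
      + act_on A i (act_on (b p) j (dirderiv f A (b p))) w)"
    unfolding Yop_apply c_def P_def by (simp only: act_on_add act_on_commute[OF ij[symmetric]])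
  have "Xop i (Yop b j f) A w - Yop b j (Xop i f) A w = - c * (\<Sum>p\<in>P. act_on (b p) j (act_on (b p) i (f A)) w)"
    unfolding X_Y Y_X by (simp add: sum.distrib algebra_simps)
  also have "\<dots> = - c * (f A (w \<circ> Transposition.transpose i j) - f A w / of_nat CARD('N))"
    unfolding P_def casimir_act_on_two_factors[OF b ij] ..
  also have "\<dots> = 1 / of_nat CARD('n) * f A w
      - of_nat CARD('N) / of_nat CARD('n) * f A (w \<circ> Transposition.transpose i j)"
    unfolding c_def by (simp add: field_simps)
  finally show ?thesis .
qed

theorem mainTheorem13:
  fixes b :: "nat \<Rightarrow> complex^'N^'N"
  assumes "CARD('N) dvd CARD('n::finite)"
    and "orthonormal_sl_basis b"
  shows
    "(\<forall>f\<in>(VN :: (complex^'N^'N \<Rightarrow> ('n \<Rightarrow> 'N) \<Rightarrow> complex) set).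
        (\<forall>\<sigma>. \<sigma> permutes (UNIV::'n set) \<longrightarrow> Pop \<sigma> f \<in> VN) \<and>
        (\<forall>i. Xop i f \<in> VN) \<and> (\<forall>i. Yop b i f \<in> VN))
   \<and> eqV (Pop id) (\<lambda>f::('N,'n) vfun. f)
   \<and> (\<forall>\<sigma> \<tau>. \<sigma> permutes (UNIV::'n set) \<longrightarrow> \<tau> permutes UNIV \<longrightarrow>
        eqV (Pop (\<sigma> \<circ> \<tau>)) (\<lambda>f::('N,'n) vfun. Pop \<sigma> (Pop \<tau> f)))
   \<and> (\<forall>\<sigma> (i::'n). \<sigma> permutes (UNIV::'n set) \<longrightarrow>
        eqV (\<lambda>f::('N,'n) vfun. Pop \<sigma> (Xop i (Pop (inv \<sigma>) f))) (Xop (\<sigma> i)) \<and>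
        eqV (\<lambda>f::('N,'n) vfun. Pop \<sigma> (Yop b i (Pop (inv \<sigma>) f))) (Yop b (\<sigma> i)))
   \<and> eqV (\<lambda>f::('N,'n) vfun. \<Sum>i\<in>UNIV. Xop i f) (\<lambda>f::('N,'n) vfun. 0)
   \<and> eqV (\<lambda>f::('N,'n) vfun. \<Sum>i\<in>UNIV. Yop b i f) (\<lambda>f::('N,'n) vfun. 0)
   \<and> (\<forall>(i::'n) j. eqV (opcomm (Xop i) (Xop j)) (\<lambda>f::('N,'n) vfun. 0) \<and> eqV (opcomm (Yop b i) (Yop b j)) (\<lambda>f::('N,'n) vfun. 0))
   \<and> (\<forall>(i::'n) j. i \<noteq> j \<longrightarrow>
        eqV (opcomm (Xop i) (Yop b j))
            (\<lambda>(f::('N,'n) vfun) A w. (1 / of_nat CARD('n)) * f A w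
               - (of_nat CARD('N) / of_nat CARD('n)) * Pop (Transposition.transpose i j) f A w))"
proof -
  note b = assms(2)
  have "\<forall>(i::'n) j. eqV (opcomm (Xop i) (Xop j)) (\<lambda>f::('N,'n) vfun. 0) \<and>
      eqV (opcomm (Yop b i) (Yop b j)) (\<lambda>f::('N,'n) vfun. 0)"
    by (auto simp: eqV_def opcomm_def fun_eq_iff Xop_commute Yop_commute[OF VN_polynomial_map])
  moreover have "\<forall>(i::'n) j. i \<noteq> j \<longrightarrow> eqV (opcomm (Xop i) (Yop b j))
      (\<lambda>(f::('N,'n) vfun) A w. (1 / of_nat CARD('n)) * f A w
         - (of_nat CARD('N) / of_nat CARD('n)) * Pop (Transposition.transpose i j) f A w)"
    by (auto simp: eqV_def opcomm_def fun_eq_iff Pop_def perm_act_def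
        Xop_Yop_commutator[OF VN_polynomial_map b])
  ultimately show ?thesis
    using Pop_VN Xop_VN Yop_VN[OF _ b] sum_Xop_eq_0 sum_Yop_eq_0[OF _ b]
    by (auto simp: eqV_def fun_eq_iff Pop_id Pop_comp Pop_conj_Xop Pop_conj_Yop)
qed

end
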